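(* Let $R=[0,1]^2$, $s\in\mathbb{N}$, $u=2^{-s}$, and let $(B_1,B_2)$ be a good box pair. Let $\ell=\{a\lambda+b\}$ and $\ell'=\{a'\lambda+b'\}$ be two lines in $\mathcal{L}$ traversing $(B_1,B_2)$, with $a,a'$ unit direction vectors and $b,b'$ the intersection points of $\ell,\ell'$ with the line $y=-x$. Then $\|b-b'\|_\infty\le4\sqrt u$. In particular, $B=O(\sqrt u)$, where $B$ is the supremum of $\|b_c-b\|_\infty$ over all lines in $\mathcal{L}$ traversing $(B_1,B_2)$, $b$ their intersection with $y=-x$, and $b_c$ the intersection of the line through $c_1,c_2$ with $y=-x$.
   Context: For $p,q\in\mathbb{R}^2$ write $p\le q$ if both coordinates satisfy $\le$. $R$ is split into $2^s\times2^s$ congruent closed squares ("boxes") of side length $u$. A box pair is an ordered pair $(B_1,B_2)$ of boxes with centers $c_1,c_2$. Let $\mathcal{L}$ be the set of non-vertical lines in $\mathbb{R}^2$ with positive slope; each has a unit direction vector $a=(a_1,a_2)$ with positive coordinates, and $\hat{\ell}:=\min\{a_1,a_2\}$. A line $\ell\in\mathcal{L}$ traverses $(B_1,B_2)$ if it meets both boxes. A box pair is null if $c_1\not\le c_2$; close if $c_1\le c_2$ and $\|c_1-c_2\|_2<\sqrt u$; non-diagonal if $c_1\le c_2$, $\|c_1-c_2\|_2\ge\sqrt u$, and every traversing $\ell\in\mathcal{L}$ satisfies $\hat{\ell}<u^{1/5}$; good if it is neither null, close, nor non-diagonal. $O(\sqrt u)$ means bounded by an absolute constant times $\sqrt u$,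 uniformly over $s$ and good box pairs. *)

theory Defs
  imports "HOL-Analysis.Analysis"
begin

text \<open>Points of the plane are pairs of reals. R = [0,1]^2 is divided into
  2^s x 2^s closed boxes of side u = 2^-s; box (i,j) with i,j < 2^s.\<close>

type_synonym pt = "real \<times> real"

definition pt_le :: "pt \<Rightarrow> pt \<Rightarrow> bool" where
  "pt_le p q \<longleftrightarrow> fst p \<le> fst q \<and> snd p \<le> snd q"

definition sup_dist :: "pt \<Rightarrow> pt \<Rightarrow> real" where
  "sup_dist p q = max \<bar>fst p - fst q\<bar> \<bar>snd p - snd q\<bar>"

definition euc_dist :: "pt \<Rightarrow> pt \<Rightarrow> real" where
  "euc_dist p q = sqrt ((fst p - fst q)^2 + (snd p - snd q)^2)"

definition side :: "nat \<Rightarrow> real" where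
  "side s = 1 / 2 ^ s"

definition is_box_index :: "nat \<Rightarrow> nat \<times> nat \<Rightarrow> bool" where
  "is_box_index s ij \<longleftrightarrow> fst ij < 2 ^ s \<and> snd ij < 2 ^ s"

definition box_of :: "nat \<Rightarrow> nat \<times> nat \<Rightarrow> pt set" where
  "box_of s ij = {p. real (fst ij) * side s \<le> fst p \<and> fst p \<le> real (fst ij + 1) * side s \<and>
                     real (snd ij) * side s \<le> snd p \<and> snd p \<le> real (snd ij + 1) * side s}"

definition center :: "nat \<Rightarrow> nat \<times> nat \<Rightarrow> pt" where
  "center s ij = ((real (fst ij) + 1/2) * side s, (real (snd ij) + 1/2) * side s)"

definition line_through :: "pt \<Rightarrow> pt \<Rightarrow> pt set" where
  "line_through a b = {(fst b + t * fst a, snd b + t * snd a) | t. True}"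

definition unit_pos_dir :: "pt \<Rightarrow> bool" where
  "unit_pos_dir a \<longleftrightarrow> fst a > 0 \<and> snd a > 0 \<and> (fst a)^2 + (snd a)^2 = 1"

text \<open>The class L of non-vertical lines with positive slope.\<close>
definition lines_L :: "pt set set" where
  "lines_L = {l. \<exists>a b. unit_pos_dir a \<and> l = line_through a b}"

definition dir_of :: "pt set \<Rightarrow> pt" where
  "dir_of l = (SOME a. unit_pos_dir a \<and> (\<exists>b. l = line_through a b))"

definition hat :: "pt set \<Rightarrow> real" where
  "hat l = min (fst (dir_of l)) (snd (dir_of l))"

definition traverses :: "nat \<Rightarrow> pt set \<Rightarrow> nat \<times> nat \<Rightarrow> nat \<times> nat \<Rightarrow> bool" where
  "traverses s l B1 B2 \<longleftrightarrow> l \<inter> box_of s B1 \<noteq> {} \<and> l \<inter> box_of s B2 \<noteq> {}"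

definition null_pair :: "nat \<Rightarrow> nat \<times> nat \<Rightarrow> nat \<times> nat \<Rightarrow> bool" where
  "null_pair s B1 B2 \<longleftrightarrow> \<not> pt_le (center s B1) (center s B2)"

definition close_pair :: "nat \<Rightarrow> nat \<times> nat \<Rightarrow> nat \<times> nat \<Rightarrow> bool" where
  "close_pair s B1 B2 \<longleftrightarrow> pt_le (center s B1) (center s B2) \<and>
      euc_dist (center s B1) (center s B2) < sqrt (side s)"

definition nondiagonal_pair :: "nat \<Rightarrow> nat \<times> nat \<Rightarrow> nat \<times> nat \<Rightarrow> bool" where
  "nondiagonal_pair s B1 B2 \<longleftrightarrow> pt_le (center s B1) (center s B2) \<and>
      euc_dist (center s B1) (center s B2) \<ge> sqrt (side s) \<and>
      (\<forall>l\<in>lines_L. traverses s l B1 B2 \<longrightarrow> hat l < side s powr (1/5))"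

definition good_pair :: "nat \<Rightarrow> nat \<times> nat \<Rightarrow> nat \<times> nat \<Rightarrow> bool" where
  "good_pair s B1 B2 \<longleftrightarrow> is_box_index s B1 \<and> is_box_index s B2 \<and>
      \<not> null_pair s B1 B2 \<and> \<not> close_pair s B1 B2 \<and> \<not> nondiagonal_pair s B1 B2"

definition on_antidiag :: "pt \<Rightarrow> bool" where
  "on_antidiag p \<longleftrightarrow> snd p = - fst p"

definition antidiag_point :: "pt set \<Rightarrow> pt" where
  "antidiag_point l = (THE p. p \<in> l \<and> on_antidiag p)"

definition center_point :: "nat \<Rightarrow> nat \<times> nat \<Rightarrow> nat \<times> nat \<Rightarrow> pt" where
  "center_point s B1 B2 = antidiag_point
     (line_through (fst (center s B2) - fst (center s B1), snd (center s B2) - snd (center s B1))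
                   (center s B1))"

definition Bsup :: "nat \<Rightarrow> nat \<times> nat \<Rightarrow> nat \<times> nat \<Rightarrow> real" where
  "Bsup s B1 B2 = (SUP l\<in>{l\<in>lines_L. traverses s l B1 B2}.
                     sup_dist (center_point s B1 B2) (antidiag_point l))"

end

theory Submission
  imports Defs
begin

text \<open>A line with direction \<open>a\<close> (\<open>a\<^sub>1, a\<^sub>2 \<ge> 0\<close>) meets \<open>y = -x\<close> at \<open>(-\<beta>, \<beta>)\<close>,
  where \<open>\<beta> = w (x\<^sub>1 + x\<^sub>2) - x\<^sub>1\<close> for every point \<open>x\<close> of the line and \<open>w = a\<^sub>1 / (a\<^sub>1 + a\<^sub>2) \<in> [0, 1]\<close>.
  This expression moves by at most \<open>u/2\<close> when \<open>x\<close> moves inside a box, so evaluating it at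
  the two centres for two traversing lines gives \<open>|w - w'| D \<le> 2u\<close>, where \<open>D\<close> is the
  difference of the coordinate sums of the centres; for a good pair \<open>D \<ge> \<parallel>c\<^sub>2 - c\<^sub>1\<parallel>\<^sub>2 \<ge> \<surd>u\<close>.
  Since the centres lie in \<open>[0,1]\<^sup>2\<close>, this yields \<open>D |\<beta> - \<beta>'| \<le> 2u (2 - D) + D u \<le> 4u\<close>,
  i.e. \<open>|\<beta> - \<beta>'| \<le> 4\<surd>u\<close>.\<close>

definition nonneg_dir :: "pt \<Rightarrow> bool" where
  "nonneg_dir a \<longleftrightarrow> 0 \<le> fst a \<and> 0 \<le> snd a \<and> 0 < fst a + snd a"

definition dir_weight :: "pt \<Rightarrow> real" where
  "dir_weight a = fst a / (fst a + snd a)"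

definition antidiag_offset :: "pt \<Rightarrow> pt \<Rightarrow> real" where
  "antidiag_offset a x = dir_weight a * (fst x + snd x) - fst x"

lemma unit_pos_dir_imp_nonneg_dir: "unit_pos_dir a \<Longrightarrow> nonneg_dir a"
  unfolding unit_pos_dir_def nonneg_dir_def by auto

lemma dir_weight_bounds:
  assumes "nonneg_dir a"
  shows "0 \<le> dir_weight a" "dir_weight a \<le> 1"
  using assms unfolding nonneg_dir_def dir_weight_def by (auto simp: field_simps)

lemma antidiag_offset_line_through:
  assumes "fst a + snd a \<noteq> 0" "x \<in> line_through a b"
  shows "antidiag_offset a x = antidiag_offset a b"
proof -
  obtain t where "x = (fst b + t * fst a, snd b + t * snd a)"
    using assms(2) unfolding line_through_def by auto
  then show ?thesis
    using assms(1) unfolding antidiag_offset_def dir_weight_def by (simp add: field_simps)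
qed

lemma antidiag_offset_on_antidiag: "on_antidiag b \<Longrightarrow> antidiag_offset a b = snd b"
  unfolding on_antidiag_def antidiag_offset_def by simp

lemma antidiag_point_line_through:
  assumes "fst a + snd a \<noteq> 0"
  shows "antidiag_point (line_through a b) = (- antidiag_offset a b, antidiag_offset a b)"
  unfolding antidiag_point_def
proof (rule the_equality)
  let ?\<beta> = "antidiag_offset a b" and ?t = "- (fst b + snd b) / (fst a + snd a)"
  have "(- ?\<beta>, ?\<beta>) = (fst b + ?t * fst a, snd b + ?t * snd a)"
    using assms unfolding antidiag_offset_def dir_weight_def by (simp add: field_simps)
  then have "(- ?\<beta>, ?\<beta>) \<in> line_through a b"
    unfolding line_through_def by blast
  then show "(- ?\<beta>, ?\<beta>) \<in> line_through a b \<and> on_antidiag (- ?\<beta>, ?\<beta>)"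
    unfolding on_antidiag_def by simp
next
  fix p assume p: "p \<in> line_through a b \<and> on_antidiag p"
  then have "antidiag_offset a p = antidiag_offset a b"
    using assms antidiag_offset_line_through by blast
  moreover have "antidiag_offset a p = snd p"
    using p antidiag_offset_on_antidiag by blast
  moreover have "fst p = - snd p"
    using p unfolding on_antidiag_def by simp
  ultimately show "p = (- antidiag_offset a b, antidiag_offset a b)"
    by (simp add: prod_eq_iff)
qed

lemma sup_dist_antidiag:
  "on_antidiag p \<Longrightarrow> on_antidiag q \<Longrightarrow> sup_dist p q = \<bar>snd p - snd q\<bar>"
  unfolding on_antidiag_def sup_dist_def by (simp add: abs_minus_commute)

lemma antidiag_offset_sup_dist_le:
  assumes "nonneg_dir a"
  shows "\<bar>antidiag_offset a x - antidiag_offset a c\<bar> \<le> sup_dist x c"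
proof -
  define w where "w = dir_weight a"
  define e\<^sub>1 where "e\<^sub>1 = fst x - fst c"
  define e\<^sub>2 where "e\<^sub>2 = snd x - snd c"
  have w: "0 \<le> w" "w \<le> 1" using dir_weight_bounds[OF assms] w_def by auto
  have "antidiag_offset a x - antidiag_offset a c = w * e\<^sub>2 - (1 - w) * e\<^sub>1"
    unfolding antidiag_offset_def w_def e\<^sub>1_def e\<^sub>2_def by (simp add: algebra_simps)
  also have "\<bar>\<dots>\<bar> \<le> \<bar>w * e\<^sub>2\<bar> + \<bar>(1 - w) * e\<^sub>1\<bar>"
    by (rule abs_triangle_ineq4)
  also have "\<dots> = w * \<bar>e\<^sub>2\<bar> + (1 - w) * \<bar>e\<^sub>1\<bar>"
    using w by (simp add: abs_mult)
  also have "\<dots> \<le> w * sup_dist x c + (1 - w) * sup_dist x c"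
    using w unfolding sup_dist_def e\<^sub>1_def e\<^sub>2_def by (intro add_mono mult_left_mono) auto
  finally show ?thesis by (simp add: algebra_simps)
qed

lemma antidiag_offsets_close:
  assumes a: "nonneg_dir a" and a': "nonneg_dir a'"
    and near: "\<bar>antidiag_offset a b - antidiag_offset a c\<^sub>1\<bar> \<le> u/2"
      "\<bar>antidiag_offset a b - antidiag_offset a c\<^sub>2\<bar> \<le> u/2"
      "\<bar>antidiag_offset a' b' - antidiag_offset a' c\<^sub>1\<bar> \<le> u/2"
      "\<bar>antidiag_offset a' b' - antidiag_offset a' c\<^sub>2\<bar> \<le> u/2"
    and \<sigma>: "\<sigma>\<^sub>1 = fst c\<^sub>1 + snd c\<^sub>1" "\<sigma>\<^sub>2 = fst c\<^sub>2 + snd c\<^sub>2" "0 \<le> \<sigma>\<^sub>1" "\<sigma>\<^sub>2 \<le> 2" "\<sigma>\<^sub>1 < \<sigma>\<^sub>2"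
  shows "(\<sigma>\<^sub>2 - \<sigma>\<^sub>1) * \<bar>antidiag_offset a b - antidiag_offset a' b'\<bar> \<le> 4 * u"
proof -
  define D where "D = \<sigma>\<^sub>2 - \<sigma>\<^sub>1"
  define w where "w = dir_weight a"
  define w' where "w' = dir_weight a'"
  have D: "0 < D" "\<sigma>\<^sub>1 \<le> 2 - D" using \<sigma> D_def by auto
  have "0 \<le> u / 2" using near(1) abs_ge_zero order_trans by blast
  then have u: "0 \<le> u" by simp
  have "(w - w') * D = (antidiag_offset a c\<^sub>2 - antidiag_offset a c\<^sub>1)
                    - (antidiag_offset a' c\<^sub>2 - antidiag_offset a' c\<^sub>1)"
    unfolding antidiag_offset_def D_def w_def w'_def \<sigma> by (simp add: algebra_simps)
  then have "\<bar>(w - w') * D\<bar> \<le> 2 * u"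
    using near unfolding abs_le_iff by linarith
  then have weights: "\<bar>w - w'\<bar> * D \<le> 2 * u"
    using D by (simp add: abs_mult)
  have "antidiag_offset a b - antidiag_offset a' b'
        = (w - w') * \<sigma>\<^sub>1 + ((antidiag_offset a b - antidiag_offset a c\<^sub>1)
                           - (antidiag_offset a' b' - antidiag_offset a' c\<^sub>1))"
    unfolding antidiag_offset_def w_def w'_def \<sigma> by (simp add: algebra_simps)
  moreover have "\<bar>(w - w') * \<sigma>\<^sub>1\<bar> = \<bar>w - w'\<bar> * \<sigma>\<^sub>1"
    using \<sigma> by (simp add: abs_mult)
  ultimately have "\<bar>antidiag_offset a b - antidiag_offset a' b'\<bar> \<le> \<bar>w - w'\<bar> * \<sigma>\<^sub>1 + u"
    using near(1,3) unfolding abs_le_iff by linarith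
  then have "D * \<bar>antidiag_offset a b - antidiag_offset a' b'\<bar> \<le> D * (\<bar>w - w'\<bar> * \<sigma>\<^sub>1 + u)"
    using D by (simp add: mult_left_mono)
  also have "\<dots> = (\<bar>w - w'\<bar> * D) * \<sigma>\<^sub>1 + D * u"
    by (simp add: algebra_simps)
  also have "\<dots> \<le> (2 * u) * (2 - D) + D * u"
    by (rule add_right_mono, rule mult_mono) (use weights D \<sigma> u in auto)
  also have "\<dots> \<le> 4 * u"
    using D u by (simp add: algebra_simps)
  finally show ?thesis unfolding D_def .
qed

lemma euc_dist_le_coord_sum_diff:
  assumes "pt_le p q"
  shows "euc_dist p q \<le> (fst q + snd q) - (fst p + snd p)"
proof -
  define dx where "dx = fst q - fst p"
  define dy where "dy = snd q - snd p"
  have "0 \<le> dx" "0 \<le> dy" using assms unfolding pt_le_def dx_def dy_def by auto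
  then have "sqrt (dx\<^sup>2 + dy\<^sup>2) \<le> dx + dy"
    by (intro real_le_lsqrt) (auto simp: power2_sum)
  then show ?thesis unfolding euc_dist_def dx_def dy_def by (simp add: power2_commute)
qed

lemma side_pos: "0 < side s"
  unfolding side_def by simp

lemma center_in_box_of: "center s ij \<in> box_of s ij"
  unfolding center_def box_of_def using side_pos[of s] by (auto simp: algebra_simps)

lemma abs_diff_midpoint_le:
  fixes x lo h :: real
  assumes "lo \<le> x" "x \<le> lo + h"
  shows "\<bar>x - (lo + h / 2)\<bar> \<le> h / 2"
  using assms unfolding abs_le_iff by linarith

lemma sup_dist_center_le:
  assumes "x \<in> box_of s ij"
  shows "sup_dist x (center s ij) \<le> side s / 2"
proof -
  have box: "real (fst ij) * side s \<le> fst x" "fst x \<le> real (fst ij) * side s + side s"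
    "real (snd ij) * side s \<le> snd x" "snd x \<le> real (snd ij) * side s + side s"
    using assms unfolding box_of_def by (simp_all add: distrib_right)
  have c: "fst (center s ij) = real (fst ij) * side s + side s / 2"
    "snd (center s ij) = real (snd ij) * side s + side s / 2"
    unfolding center_def by (simp_all add: distrib_right)
  have "\<bar>fst x - fst (center s ij)\<bar> \<le> side s / 2"
    unfolding c(1) using box(1,2) by (rule abs_diff_midpoint_le)
  moreover have "\<bar>snd x - snd (center s ij)\<bar> \<le> side s / 2"
    unfolding c(2) using box(3,4) by (rule abs_diff_midpoint_le)
  ultimately show ?thesis
    unfolding sup_dist_def by (rule max.boundedI)
qed

lemma center_coord_le_one:
  assumes "i < (2::nat) ^ s"
  shows "(real i + 1/2) * side s \<le> 1"
proof -
  have "real (i + 1) \<le> real ((2::nat) ^ s)"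
    using assms by (simp only: of_nat_le_iff Suc_eq_plus1[symmetric] Suc_le_eq)
  then have "real i + 1/2 \<le> 2 ^ s" by simp
  then show ?thesis unfolding side_def by (simp add: pos_divide_le_eq)
qed

lemma center_coord_sum_bounds:
  assumes "is_box_index s ij"
  shows "0 \<le> fst (center s ij) + snd (center s ij)" "fst (center s ij) + snd (center s ij) \<le> 2"
  using assms side_pos[of s] center_coord_le_one[of "fst ij" s] center_coord_le_one[of "snd ij" s]
  unfolding is_box_index_def center_def by auto

lemma good_pair_centers:
  assumes "good_pair s B1 B2"
  shows "pt_le (center s B1) (center s B2)"
    and "sqrt (side s) \<le> euc_dist (center s B1) (center s B2)"
  using assms unfolding good_pair_def null_pair_def close_pair_def by auto

lemma good_pair_coord_sum_gap:
  assumes "good_pair s B1 B2"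
  shows "sqrt (side s) \<le> (fst (center s B2) + snd (center s B2)) - (fst (center s B1) + snd (center s B1))"
  using good_pair_centers[OF assms] euc_dist_le_coord_sum_diff order_trans by blast

lemma antidiag_offset_near_center:
  assumes "nonneg_dir a" "line_through a b \<inter> box_of s ij \<noteq> {}"
  shows "\<bar>antidiag_offset a b - antidiag_offset a (center s ij)\<bar> \<le> side s / 2"
proof -
  obtain x where x: "x \<in> line_through a b" "x \<in> box_of s ij"
    using assms(2) by blast
  have "fst a + snd a \<noteq> 0" using assms(1) unfolding nonneg_dir_def by simp
  then have "antidiag_offset a x = antidiag_offset a b"
    using antidiag_offset_line_through x(1) by blast
  then show ?thesis
    using antidiag_offset_sup_dist_le[OF assms(1), of x "center s ij"] sup_dist_center_le[OF x(2)]
    by simp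
qed

lemma good_pair_antidiag_offsets_close:
  assumes good: "good_pair s B1 B2" and a: "nonneg_dir a" and a': "nonneg_dir a'"
    and tr: "traverses s (line_through a b) B1 B2" and tr': "traverses s (line_through a' b') B1 B2"
  shows "\<bar>antidiag_offset a b - antidiag_offset a' b'\<bar> \<le> 4 * sqrt (side s)"
proof -
  define u where "u = side s"
  define \<sigma>\<^sub>1 where "\<sigma>\<^sub>1 = fst (center s B1) + snd (center s B1)"
  define \<sigma>\<^sub>2 where "\<sigma>\<^sub>2 = fst (center s B2) + snd (center s B2)"
  have u: "0 < u" using side_pos u_def by simp
  have gap: "sqrt u \<le> \<sigma>\<^sub>2 - \<sigma>\<^sub>1"
    using good_pair_coord_sum_gap[OF good] u_def \<sigma>\<^sub>1_def \<sigma>\<^sub>2_def by simp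
  have "is_box_index s B1" "is_box_index s B2"
    using good unfolding good_pair_def by auto
  then have \<sigma>: "0 \<le> \<sigma>\<^sub>1" "\<sigma>\<^sub>2 \<le> 2" "\<sigma>\<^sub>1 < \<sigma>\<^sub>2"
    using center_coord_sum_bounds gap real_sqrt_gt_zero[OF u] unfolding \<sigma>\<^sub>1_def \<sigma>\<^sub>2_def
    by (simp_all, linarith)
  have hits: "line_through a b \<inter> box_of s B1 \<noteq> {}" "line_through a b \<inter> box_of s B2 \<noteq> {}"
    "line_through a' b' \<inter> box_of s B1 \<noteq> {}" "line_through a' b' \<inter> box_of s B2 \<noteq> {}"
    using tr tr' unfolding traverses_def by simp_all
  have "sqrt u * \<bar>antidiag_offset a b - antidiag_offset a' b'\<bar>
        \<le> (\<sigma>\<^sub>2 - \<sigma>\<^sub>1) * \<bar>antidiag_offset a b - antidiag_offset a' b'\<bar>"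
    using gap by (rule mult_right_mono) simp
  also have "\<dots> \<le> 4 * u"
    unfolding u_def
    using antidiag_offsets_close[OF a a' antidiag_offset_near_center[OF a hits(1)]
        antidiag_offset_near_center[OF a hits(2)] antidiag_offset_near_center[OF a' hits(3)]
        antidiag_offset_near_center[OF a' hits(4)] \<sigma>\<^sub>1_def \<sigma>\<^sub>2_def \<sigma>] .
  also have "\<dots> = sqrt u * (4 * sqrt u)"
    using u by simp
  finally show ?thesis
    using u u_def by simp
qed

definition center_dir :: "nat \<Rightarrow> nat \<times> nat \<Rightarrow> nat \<times> nat \<Rightarrow> pt" where
  "center_dir s B1 B2 = (fst (center s B2) - fst (center s B1), snd (center s B2) - snd (center s B1))"

lemma center_line_traverses: "traverses s (line_through (center_dir s B1 B2) (center s B1)) B1 B2"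
proof -
  have "center s B1 \<in> line_through (center_dir s B1 B2) (center s B1)"
    unfolding line_through_def by (rule CollectI, rule exI[of _ 0]) simp
  moreover have "center s B2 \<in> line_through (center_dir s B1 B2) (center s B1)"
    unfolding line_through_def center_dir_def by (rule CollectI, rule exI[of _ 1]) simp
  ultimately show ?thesis unfolding traverses_def using center_in_box_of by blast
qed

lemma good_pair_nonneg_center_dir:
  assumes good: "good_pair s B1 B2"
  shows "nonneg_dir (center_dir s B1 B2)"
  using good_pair_centers(1)[OF good] good_pair_coord_sum_gap[OF good] real_sqrt_gt_zero[OF side_pos[of s]]
  unfolding nonneg_dir_def pt_le_def center_dir_def fst_conv snd_conv by (intro conjI; linarith)

lemma good_pair_Bsup_le:
  assumes good: "good_pair s B1 B2"
  shows "Bsup s B1 B2 \<le> 4 * sqrt (side s)"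
  unfolding Bsup_def
proof (rule cSUP_least)
  \<comment> \<open>The only use of the condition on \<open>hat\<close>: it makes the supremum range over a nonempty set.\<close>
  show "{l \<in> lines_L. traverses s l B1 B2} \<noteq> {}"
    using good good_pair_centers[OF good] unfolding good_pair_def nondiagonal_pair_def by auto
next
  fix l assume "l \<in> {l \<in> lines_L. traverses s l B1 B2}"
  then obtain a b where "unit_pos_dir a" and l: "l = line_through a b" "traverses s l B1 B2"
    unfolding lines_L_def by blast
  then have a: "nonneg_dir a" by (simp add: unit_pos_dir_imp_nonneg_dir)
  have c: "nonneg_dir (center_dir s B1 B2)"
    using good by (rule good_pair_nonneg_center_dir)
  have "\<bar>antidiag_offset (center_dir s B1 B2) (center s B1) - antidiag_offset a b\<bar> \<le> 4 * sqrt (side s)"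
    using good_pair_antidiag_offsets_close[OF good c a] center_line_traverses l by simp
  then show "sup_dist (center_point s B1 B2) (antidiag_point l) \<le> 4 * sqrt (side s)"
    using a c unfolding center_point_def center_dir_def[symmetric] l(1) nonneg_dir_def
    by (simp add: antidiag_point_line_through sup_dist_def abs_minus_commute)
qed

theorem lemma7:
  shows "(\<forall>s B1 B2 a b a' b'. good_pair s B1 B2 \<longrightarrow>
            unit_pos_dir a \<longrightarrow> unit_pos_dir a' \<longrightarrow>
            traverses s (line_through a b) B1 B2 \<longrightarrow> traverses s (line_through a' b') B1 B2 \<longrightarrow>
            on_antidiag b \<longrightarrow> on_antidiag b' \<longrightarrow>
            sup_dist b b' \<le> 4 * sqrt (side s))
       \<and> (\<exists>C. \<forall>s B1 B2. good_pair s B1 B2 \<longrightarrow> Bsup s B1 B2 \<le> C * sqrt (side s))"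
proof (intro conjI allI impI exI)
  fix s B1 B2 a b a' b'
  assume "good_pair s B1 B2" "unit_pos_dir a" "unit_pos_dir a'"
    "traverses s (line_through a b) B1 B2" "traverses s (line_through a' b') B1 B2"
    and b: "on_antidiag b" "on_antidiag b'"
  then have "\<bar>antidiag_offset a b - antidiag_offset a' b'\<bar> \<le> 4 * sqrt (side s)"
    using good_pair_antidiag_offsets_close unit_pos_dir_imp_nonneg_dir by blast
  then show "sup_dist b b' \<le> 4 * sqrt (side s)"
    using b by (simp add: sup_dist_antidiag antidiag_offset_on_antidiag)
next
  fix s B1 B2
  assume "good_pair s B1 B2"
  then show "Bsup s B1 B2 \<le> 4 * sqrt (side s)"
    by (rule good_pair_Bsup_le)
qed

end
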